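(* Let $A$ be a differential ring and $X=\operatorname{Spec}^\Delta A$. For every $\eta\in\mathcal O'(X)$ there exist $b_1,\ldots,b_m\in A$ such that $\iota'(b_i)\eta\in\iota'(A)$ for all $i$ and $\{b_1,\ldots,b_m\}=A$.
   Context: All rings are commutative with unit. A differential ring is a ring with finitely many pairwise commuting derivations. $X=\operatorname{Spec}^\Delta A$ is the set of prime ideals of $A$ closed under all derivations, with the Kolchin topology (closed sets $V(E)=\{\mathfrak p\in X: E\subseteq\mathfrak p\}$, $E\subseteq A$); for $s\in A$, $X_s=\{\mathfrak p\in X: s\notin\mathfrak p\}$. For $E\subseteq A$, $\{E\}$ is the smallest radical differential ideal containing $E$. For $\mathfrak p\in X$, $K(\mathfrak p)$ is the fraction field of $A/\mathfrak p$ with the induced derivations. For an open $U\subseteq X$, $\mathcal O'(U)$ is the set of functions $f$ on $U$ with $f(\mathfrak p)\in K(\mathfrak p)$ that are regular at every point of $U$, where $f$ is regular at $\mathfrak p$ if there exist an open neighborhood $W\subseteq U$ of $\mathfrak p$ and $a,b\in A$ with $b\notin\mathfrak q$ and $f(\mathfrak q)=a/b$ in $K(\mathfrak q)$ for all $\mathfrak q\in W$. With pointwise operations and pointwise derivations, $\mathcal O'(U)$ is a differential ring. The differential homomorphism $\iota'\colon A\to\mathcal O'(X)$ sends $a$ to the function $\mathfrak p\mapsto (a \bmod \mathfrak p)\in K(\mathfrak p)$. *)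

theory Defs
  imports "HOL-Algebra.Algebra"
begin

definition derivation :: "('a, 'b) ring_scheme \<Rightarrow> ('a \<Rightarrow> 'a) \<Rightarrow> bool" where
  "derivation R D \<longleftrightarrow>
     D \<in> carrier R \<rightarrow> carrier R \<and>
     (\<forall>x\<in>carrier R. \<forall>y\<in>carrier R. D (x \<oplus>\<^bsub>R\<^esub> y) = D x \<oplus>\<^bsub>R\<^esub> D y) \<and>
     (\<forall>x\<in>carrier R. \<forall>y\<in>carrier R.
        D (x \<otimes>\<^bsub>R\<^esub> y) = (x \<otimes>\<^bsub>R\<^esub> D y) \<oplus>\<^bsub>R\<^esub> (D x \<otimes>\<^bsub>R\<^esub> y))"

definition diff_ring :: "('a, 'b) ring_scheme \<Rightarrow> ('a \<Rightarrow> 'a) set \<Rightarrow> bool" where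
  "diff_ring R Ds \<longleftrightarrow> cring R \<and> finite Ds \<and> (\<forall>D\<in>Ds. derivation R D) \<and>
     (\<forall>D\<in>Ds. \<forall>E\<in>Ds. \<forall>x\<in>carrier R. D (E x) = E (D x))"

definition diff_closed :: "('a \<Rightarrow> 'a) set \<Rightarrow> 'a set \<Rightarrow> bool" where
  "diff_closed Ds I \<longleftrightarrow> (\<forall>D\<in>Ds. \<forall>x\<in>I. D x \<in> I)"

definition radical_ideal :: "('a, 'b) ring_scheme \<Rightarrow> 'a set \<Rightarrow> bool" where
  "radical_ideal R I \<longleftrightarrow> ideal I R \<and>
     (\<forall>a\<in>carrier R. \<forall>n::nat. a [^]\<^bsub>R\<^esub> n \<in> I \<longrightarrow> a \<in> I)"

definition rad_diff_ideal_gen ::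
  "('a, 'b) ring_scheme \<Rightarrow> ('a \<Rightarrow> 'a) set \<Rightarrow> 'a set \<Rightarrow> 'a set" where
  "rad_diff_ideal_gen R Ds E =
     \<Inter>{I. radical_ideal R I \<and> diff_closed Ds I \<and> E \<subseteq> I}"

definition diff_spec :: "('a, 'b) ring_scheme \<Rightarrow> ('a \<Rightarrow> 'a) set \<Rightarrow> 'a set set" where
  "diff_spec R Ds = {P. primeideal P R \<and> diff_closed Ds P}"

definition kolchin_open :: "('a, 'b) ring_scheme \<Rightarrow> ('a \<Rightarrow> 'a) set \<Rightarrow> 'a set set \<Rightarrow> bool" where
  "kolchin_open R Ds U \<longleftrightarrow>
     (\<exists>E\<subseteq>carrier R. U = diff_spec R Ds - {P \<in> diff_spec R Ds. E \<subseteq> P})"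

text \<open>Elements of \<open>K(p)\<close> = Frac(A/p) are represented as equivalence classes of pairs
  \<open>(a,b)\<close>, \<open>b \<notin> p\<close>, with \<open>(a,b) ~ (c,d)\<close> iff \<open>ad - cb \<in> p\<close>; i.e. \<open>a/b\<close>.\<close>
definition frac_rel :: "('a, 'b) ring_scheme \<Rightarrow> 'a set \<Rightarrow> (('a \<times> 'a) \<times> ('a \<times> 'a)) set" where
  "frac_rel R P = {((a, b), (c, d)).
     a \<in> carrier R \<and> b \<in> carrier R - P \<and> c \<in> carrier R \<and> d \<in> carrier R - P \<and>
     (a \<otimes>\<^bsub>R\<^esub> d) \<ominus>\<^bsub>R\<^esub> (c \<otimes>\<^bsub>R\<^esub> b) \<in> P}"

definition frac :: "('a, 'b) ring_scheme \<Rightarrow> 'a set \<Rightarrow> 'a \<Rightarrow> 'a \<Rightarrow> ('a \<times> 'a) set" where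
  "frac R P a b = frac_rel R P `` {(a, b)}"

definition residue_field :: "('a, 'b) ring_scheme \<Rightarrow> 'a set \<Rightarrow> ('a \<times> 'a) set set" where
  "residue_field R P = {frac R P a b | a b. a \<in> carrier R \<and> b \<in> carrier R - P}"

text \<open>Multiplication in \<open>K(p)\<close> (well defined on classes; via representatives).\<close>
definition frac_mult ::
  "('a, 'b) ring_scheme \<Rightarrow> 'a set \<Rightarrow> ('a \<times> 'a) set \<Rightarrow> ('a \<times> 'a) set \<Rightarrow> ('a \<times> 'a) set" where
  "frac_mult R P x y =
     (let u = (SOME u. u \<in> x); v = (SOME v. v \<in> y)
      in frac R P (fst u \<otimes>\<^bsub>R\<^esub> fst v) (snd u \<otimes>\<^bsub>R\<^esub> snd v))"

definition regular_at ::
  "('a, 'b) ring_scheme \<Rightarrow> ('a \<Rightarrow> 'a) set \<Rightarrow> 'a set set \<Rightarrow> ('a set \<Rightarrow> ('a \<times> 'a) set) \<Rightarrow> 'a set \<Rightarrow> bool" where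
  "regular_at R Ds U f P \<longleftrightarrow>
     (\<exists>W. kolchin_open R Ds W \<and> W \<subseteq> U \<and> P \<in> W \<and>
        (\<exists>a\<in>carrier R. \<exists>b\<in>carrier R. \<forall>Q\<in>W. b \<notin> Q \<and> f Q = frac R Q a b))"

definition O' ::
  "('a, 'b) ring_scheme \<Rightarrow> ('a \<Rightarrow> 'a) set \<Rightarrow> 'a set set \<Rightarrow> ('a set \<Rightarrow> ('a \<times> 'a) set) set" where
  "O' R Ds U = {f. (\<forall>P\<in>U. f P \<in> residue_field R P) \<and> (\<forall>P\<in>U. regular_at R Ds U f P)}"

definition iota' :: "('a, 'b) ring_scheme \<Rightarrow> 'a \<Rightarrow> 'a set \<Rightarrow> ('a \<times> 'a) set" where
  "iota' R a = (\<lambda>P. frac R P a \<one>\<^bsub>R\<^esub>)"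

end

theory Submission
  imports Defs
begin

text \<open>
  Let \<open>\<eta>\<close> be a global regular function on \<open>X = Spec\<^sup>\<Delta> A\<close>. Call \<open>c \<in> A\<close> a
  denominator of \<open>\<eta>\<close> if \<open>\<iota>'(c) \<eta> = \<iota>'(a)\<close> for some \<open>a \<in> A\<close>.

  Local half: every point \<open>P \<in> X\<close> lies off some denominator. Near \<open>P\<close> we have
  \<open>\<eta> = a/b\<close> on a basic open \<open>X\<^sub>s \<ni> P\<close>; then \<open>bs\<close> is a denominator with numerator \<open>as\<close>,
  because off \<open>X\<^sub>s\<close> the factor \<open>s\<close> vanishes.

  Global half, a quasi-compactness statement for \<open>X\<close>: if a set \<open>S \<subseteq> A\<close> is contained
  in no differential prime, then \<open>{S\<^sub>0} = A\<close> for a finite \<open>S\<^sub>0 \<subseteq> S\<close>. Indeed \<open>1 \<in> {S}\<close>,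
  since by Zorn a proper radical differential ideal lies in a maximal one, which is
  prime (via colon ideals and Kaplansky's lemma \<open>xy \<in> I \<Longrightarrow> D(x)y \<in> I\<close>); and \<open>{S}\<close> is
  the directed union of the \<open>{S\<^sub>0}\<close>, so \<open>1\<close> already lies in one of them.
  Applying the global half to the set of all denominators gives the theorem.
\<close>

definition rad_diff_ideal :: "('a, 'b) ring_scheme \<Rightarrow> ('a \<Rightarrow> 'a) set \<Rightarrow> 'a set \<Rightarrow> bool" where
  "rad_diff_ideal R Ds I \<longleftrightarrow> radical_ideal R I \<and> diff_closed Ds I"

lemma (in cring) ideal_by_closure:
  assumes "I \<subseteq> carrier R" "\<zero> \<in> I"
    and "\<And>x y. x \<in> I \<Longrightarrow> y \<in> I \<Longrightarrow> x \<oplus> y \<in> I"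
    and "\<And>x. x \<in> I \<Longrightarrow> \<ominus> x \<in> I"
    and "\<And>x y. x \<in> I \<Longrightarrow> y \<in> carrier R \<Longrightarrow> y \<otimes> x \<in> I"
  shows "ideal I R"
proof -
  have "\<And>x y. x \<in> I \<Longrightarrow> y \<in> carrier R \<Longrightarrow> x \<otimes> y \<in> I"
    using assms(1,5) m_comm by (metis subsetD)
  then show ?thesis
    using assms by unfold_locales (auto simp flip: a_inv_def)
qed

text \<open>Kaplansky's lemma: if \<open>xy\<close> lies in a radical \<open>D\<close>-stable ideal, so does \<open>D(x) y\<close>,
  because \<open>(D(x) y)\<^sup>2 = D(x) y \<cdot> D(xy) - xy \<cdot> D(x) D(y)\<close>.\<close>
lemma (in cring) radical_diff_ideal_deriv_mult:
  assumes rad: "radical_ideal R I" and der: "derivation R D" and cl: "\<forall>z\<in>I. D z \<in> I"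
    and x: "x \<in> carrier R" and y: "y \<in> carrier R" and xy: "x \<otimes> y \<in> I"
  shows "D x \<otimes> y \<in> I"
proof -
  interpret I: ideal I R using rad radical_ideal_def by blast
  have Dx: "D x \<in> carrier R" and Dy: "D y \<in> carrier R"
    using der x y unfolding derivation_def by auto
  have Leibniz: "D (x \<otimes> y) = x \<otimes> D y \<oplus> D x \<otimes> y"
    using der x y unfolding derivation_def by blast
  have "(D x \<otimes> y) [^] (2::nat) = (D x \<otimes> y) \<otimes> D (x \<otimes> y) \<ominus> (x \<otimes> y) \<otimes> (D x \<otimes> D y)"
    unfolding Leibniz numeral_2_eq_2 using Dx Dy x y by simp algebra
  moreover have "(D x \<otimes> y) \<otimes> D (x \<otimes> y) \<in> I" and "(x \<otimes> y) \<otimes> (D x \<otimes> D y) \<in> I"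
    using I.I_l_closed I.I_r_closed cl xy Dx Dy y by auto
  ultimately have "(D x \<otimes> y) [^] (2::nat) \<in> I"
    by (simp add: a_minus_def I.a_closed I.a_inv_closed)
  then show ?thesis
    using rad Dx y unfolding radical_ideal_def by blast
qed

text \<open>\<open>{E}\<close> is itself a radical differential ideal (the family intersected contains \<open>A\<close>).\<close>
lemma rad_diff_ideal_gen_rad_diff_ideal:
  assumes dr: "diff_ring R Ds" and E: "E \<subseteq> carrier R"
  shows "rad_diff_ideal R Ds (rad_diff_ideal_gen R Ds E)"
proof -
  interpret cring R using dr diff_ring_def by blast
  let ?F = "{I. radical_ideal R I \<and> diff_closed Ds I \<and> E \<subseteq> I}"
  have "carrier R \<in> ?F"
    using oneideal E dr unfolding radical_ideal_def diff_closed_def diff_ring_def derivation_def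
    by (auto simp: Pi_def)
  then have "ideal (\<Inter>?F) R"
    by (intro i_Intersect) (auto simp: radical_ideal_def)
  then have "radical_ideal R (\<Inter>?F)"
    unfolding radical_ideal_def by blast
  moreover have "diff_closed Ds (\<Inter>?F)"
    unfolding diff_closed_def by blast
  ultimately show ?thesis
    unfolding rad_diff_ideal_def rad_diff_ideal_gen_def by blast
qed

lemma rad_diff_ideal_gen_incl: "E \<subseteq> rad_diff_ideal_gen R Ds E"
  unfolding rad_diff_ideal_gen_def by blast

lemma rad_diff_ideal_gen_least:
  "rad_diff_ideal R Ds J \<Longrightarrow> E \<subseteq> J \<Longrightarrow> rad_diff_ideal_gen R Ds E \<subseteq> J"
  unfolding rad_diff_ideal_gen_def rad_diff_ideal_def by blast

lemma rad_diff_ideal_gen_mono: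
  "diff_ring R Ds \<Longrightarrow> F \<subseteq> carrier R \<Longrightarrow> E \<subseteq> F \<Longrightarrow>
    rad_diff_ideal_gen R Ds E \<subseteq> rad_diff_ideal_gen R Ds F"
  by (meson rad_diff_ideal_gen_incl rad_diff_ideal_gen_least
      rad_diff_ideal_gen_rad_diff_ideal subset_trans)

text \<open>The colon ideal \<open>(M : b)\<close> of a radical differential ideal is again one; stability
  under derivations is Kaplansky's lemma.\<close>
lemma rad_diff_ideal_colon:
  fixes R (structure)
  assumes dr: "diff_ring R Ds" and M: "rad_diff_ideal R Ds M" and b: "b \<in> carrier R"
  shows "rad_diff_ideal R Ds {x \<in> carrier R. x \<otimes> b \<in> M}"
proof -
  interpret cring R using dr diff_ring_def by blast
  let ?Q = "{x \<in> carrier R. x \<otimes> b \<in> M}"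
  have rad: "radical_ideal R M" and dc: "diff_closed Ds M"
    using M rad_diff_ideal_def by auto
  then interpret M: ideal M R unfolding radical_ideal_def by blast
  have "ideal ?Q R"
  proof (rule ideal_by_closure)
    show "x \<oplus> y \<in> ?Q" if "x \<in> ?Q" "y \<in> ?Q" for x y
      using that b l_distr[of x y b] M.a_closed by auto
    show "\<ominus> x \<in> ?Q" if "x \<in> ?Q" for x
      using that b l_minus[of x b] M.a_inv_closed by auto
    show "y \<otimes> x \<in> ?Q" if "x \<in> ?Q" "y \<in> carrier R" for x y
      using that b m_assoc[of y x b] M.I_l_closed by auto
  qed (use b in auto)
  moreover have "a \<in> ?Q" if a: "a \<in> carrier R" and an: "a [^] n \<in> ?Q" for a and n :: nat
  proof -
    have "(a \<otimes> b) [^] Suc n = (a [^] n \<otimes> b) \<otimes> (a \<otimes> b [^] n)"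
      using a b by (simp add: nat_pow_distrib m_ac)
    also have "\<dots> \<in> M" using an a b M.I_r_closed by auto
    finally show ?thesis using rad a b unfolding radical_ideal_def by blast
  qed
  moreover have "D x \<in> ?Q" if D: "D \<in> Ds" and x: "x \<in> ?Q" for D x
  proof -
    have der: "derivation R D" using dr D diff_ring_def by blast
    then have "D x \<in> carrier R" using x unfolding derivation_def by auto
    moreover have "D x \<otimes> b \<in> M"
      using radical_diff_ideal_deriv_mult[OF rad der] dc D x b unfolding diff_closed_def by auto
    ultimately show ?thesis by simp
  qed
  ultimately show ?thesis
    unfolding rad_diff_ideal_def radical_ideal_def diff_closed_def by blast
qed

text \<open>A radical differential ideal maximal among the proper ones is prime: if \<open>ab \<in> M\<close>,
  the colon ideal \<open>(M : b)\<close> contains \<open>M\<close> and \<open>a\<close>, so it is \<open>A\<close> (and \<open>b \<in> M\<close>) or equals \<open>M\<close>.\<close>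
lemma maximal_rad_diff_ideal_prime:
  fixes R (structure)
  assumes dr: "diff_ring R Ds" and M: "rad_diff_ideal R Ds M" and one: "\<one> \<notin> M"
    and max: "\<And>J. rad_diff_ideal R Ds J \<Longrightarrow> \<one> \<notin> J \<Longrightarrow> M \<subseteq> J \<Longrightarrow> J = M"
  shows "M \<in> diff_spec R Ds"
proof -
  interpret cring R using dr diff_ring_def by blast
  interpret M: ideal M R using M unfolding rad_diff_ideal_def radical_ideal_def by blast
  have "primeideal M R"
  proof (rule primeidealI[OF M.is_ideal is_cring])
    show "carrier R \<noteq> M" using one by auto
  next
    fix a b assume a: "a \<in> carrier R" and b: "b \<in> carrier R" and ab: "a \<otimes> b \<in> M"
    let ?Q = "{x \<in> carrier R. x \<otimes> b \<in> M}"
    have "M \<subseteq> ?Q" using M.I_r_closed b M.Icarr by auto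
    then have "\<one> \<in> ?Q \<or> ?Q = M"
      using max rad_diff_ideal_colon[OF dr M b] by blast
    then show "a \<in> M \<or> b \<in> M" using a b ab by auto
  qed
  then show ?thesis using M unfolding diff_spec_def rad_diff_ideal_def by blast
qed

lemma directed_union_rad_diff_ideal:
  fixes R (structure)
  assumes dr: "diff_ring R Ds" and ne: "F \<noteq> {}"
    and F: "\<And>I. I \<in> F \<Longrightarrow> rad_diff_ideal R Ds I"
    and dir: "\<And>I J. I \<in> F \<Longrightarrow> J \<in> F \<Longrightarrow> \<exists>K\<in>F. I \<union> J \<subseteq> K"
  shows "rad_diff_ideal R Ds (\<Union>F)"
proof -
  interpret cring R using dr diff_ring_def by blast
  have ideal: "ideal I R" and rad: "radical_ideal R I" and dc: "diff_closed Ds I"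
    if "I \<in> F" for I
    using F[OF that] unfolding rad_diff_ideal_def radical_ideal_def by auto
  have "ideal (\<Union>F) R"
  proof (rule ideal_by_closure)
    show "\<Union>F \<subseteq> carrier R"
      using ideal ideal.Icarr by (meson Union_least subsetI)
    obtain I where "I \<in> F" using ne by blast
    then show "\<zero> \<in> \<Union>F"
      using ideal[THEN ideal.axioms(1), THEN additive_subgroup.zero_closed] by blast
    show "x \<oplus> y \<in> \<Union>F" if xy: "x \<in> \<Union>F" "y \<in> \<Union>F" for x y
    proof -
      obtain I J where "I \<in> F" "J \<in> F" "x \<in> I" "y \<in> J" using xy by blast
      then obtain K where "K \<in> F" "x \<in> K" "y \<in> K" using dir by blast
      then show ?thesis
        using ideal[THEN ideal.axioms(1), THEN additive_subgroup.a_closed] by blast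
    qed
    show "\<ominus> x \<in> \<Union>F" if "x \<in> \<Union>F" for x
      using that ideal[THEN ideal.axioms(1), THEN additive_subgroup.a_inv_closed] by blast
    show "y \<otimes> x \<in> \<Union>F" if "x \<in> \<Union>F" "y \<in> carrier R" for x y
      using that ideal[THEN ideal.I_l_closed] by blast
  qed
  moreover have "a \<in> \<Union>F" if "a \<in> carrier R" "a [^] n \<in> \<Union>F" for a and n :: nat
    using that rad unfolding radical_ideal_def by blast
  moreover have "diff_closed Ds (\<Union>F)"
    using dc unfolding diff_closed_def by blast
  ultimately show ?thesis
    unfolding rad_diff_ideal_def radical_ideal_def by blast
qed

text \<open>Finiteness of generation: every element of \<open>{S}\<close> lies in \<open>{S\<^sub>0}\<close> for a finite
  \<open>S\<^sub>0 \<subseteq> S\<close>, as the directed union of these \<open>{S\<^sub>0}\<close> is a radical differential ideal.\<close>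
lemma rad_diff_ideal_gen_finite:
  fixes R (structure)
  assumes dr: "diff_ring R Ds" and S: "S \<subseteq> carrier R"
    and x: "x \<in> rad_diff_ideal_gen R Ds S"
  shows "\<exists>S0. finite S0 \<and> S0 \<subseteq> S \<and> x \<in> rad_diff_ideal_gen R Ds S0"
proof -
  define F where "F = rad_diff_ideal_gen R Ds ` {S0. finite S0 \<and> S0 \<subseteq> S}"
  have "rad_diff_ideal R Ds (\<Union>F)"
  proof (rule directed_union_rad_diff_ideal[OF dr])
    show "F \<noteq> {}" unfolding F_def by auto
    show "rad_diff_ideal R Ds I" if "I \<in> F" for I
    proof -
      obtain S0 where "S0 \<subseteq> S" "I = rad_diff_ideal_gen R Ds S0"
        using \<open>I \<in> F\<close> unfolding F_def by blast
      then show ?thesis using S rad_diff_ideal_gen_rad_diff_ideal[OF dr, of S0] by simp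
    qed
    show "\<exists>K\<in>F. I \<union> J \<subseteq> K" if IJ: "I \<in> F" "J \<in> F" for I J
    proof -
      obtain S0 S1 where S01: "finite S0" "S0 \<subseteq> S" "I = rad_diff_ideal_gen R Ds S0"
        "finite S1" "S1 \<subseteq> S" "J = rad_diff_ideal_gen R Ds S1"
        using IJ unfolding F_def by blast
      have "S0 \<union> S1 \<subseteq> carrier R" using S01 S by blast
      then have "I \<union> J \<subseteq> rad_diff_ideal_gen R Ds (S0 \<union> S1)"
        unfolding S01(3,6) using rad_diff_ideal_gen_mono[OF dr] by (meson Un_least Un_upper1 Un_upper2)
      moreover have "rad_diff_ideal_gen R Ds (S0 \<union> S1) \<in> F"
        unfolding F_def using S01 by auto
      ultimately show ?thesis by blast
    qed
  qed
  moreover have "S \<subseteq> \<Union>F"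
  proof
    fix s assume "s \<in> S"
    then have "rad_diff_ideal_gen R Ds {s} \<in> F" unfolding F_def by auto
    moreover have "s \<in> rad_diff_ideal_gen R Ds {s}" using rad_diff_ideal_gen_incl[of "{s}"] by simp
    ultimately show "s \<in> \<Union>F" by blast
  qed
  ultimately have "rad_diff_ideal_gen R Ds S \<subseteq> \<Union>F"
    by (rule rad_diff_ideal_gen_least)
  then show ?thesis using x unfolding F_def by blast
qed

lemma proper_rad_diff_ideal_in_diff_prime:
  fixes R (structure)
  assumes dr: "diff_ring R Ds" and J: "rad_diff_ideal R Ds J" and one: "\<one> \<notin> J"
  shows "\<exists>P\<in>diff_spec R Ds. J \<subseteq> P"
proof -
  define A where "A = {I. rad_diff_ideal R Ds I \<and> \<one> \<notin> I \<and> J \<subseteq> I}"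
  have "\<exists>M\<in>A. \<forall>I\<in>A. M \<subseteq> I \<longrightarrow> I = M"
  proof (rule subset_Zorn_nonempty)
    show "A \<noteq> {}" using J one unfolding A_def by blast
    show "\<Union>C \<in> A" if C: "C \<noteq> {}" "subset.chain A C" for C
    proof -
      have CA: "C \<subseteq> A" and chain: "\<And>I K. I \<in> C \<Longrightarrow> K \<in> C \<Longrightarrow> I \<subseteq> K \<or> K \<subseteq> I"
        using C(2) unfolding subset_chain_def by blast+
      have "rad_diff_ideal R Ds (\<Union>C)"
      proof (rule directed_union_rad_diff_ideal[OF dr C(1)])
        show "rad_diff_ideal R Ds I" if "I \<in> C" for I
          using that CA unfolding A_def by blast
        show "\<exists>K\<in>C. I \<union> K' \<subseteq> K" if "I \<in> C" "K' \<in> C" for I K'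
          using chain[OF that] that by (metis sup.absorb1 sup.absorb2 order.refl)
      qed
      moreover have "\<one> \<notin> \<Union>C" and "J \<subseteq> \<Union>C"
        using CA C(1) unfolding A_def by blast+
      ultimately show ?thesis unfolding A_def by blast
    qed
  qed
  then obtain M where M: "M \<in> A" and max: "\<forall>I\<in>A. M \<subseteq> I \<longrightarrow> I = M" by blast
  have "M \<in> diff_spec R Ds"
  proof (rule maximal_rad_diff_ideal_prime[OF dr])
    show "rad_diff_ideal R Ds M" "\<one> \<notin> M" using M unfolding A_def by blast+
    show "I = M" if "rad_diff_ideal R Ds I" "\<one> \<notin> I" "M \<subseteq> I" for I
      using that M max unfolding A_def by blast
  qed
  then show ?thesis using M unfolding A_def by blast
qed

lemma diff_spec_finite_cover:
  fixes R (structure)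
  assumes dr: "diff_ring R Ds" and S: "S \<subseteq> carrier R"
    and cover: "\<And>P. P \<in> diff_spec R Ds \<Longrightarrow> \<not> S \<subseteq> P"
  shows "\<exists>S0. finite S0 \<and> S0 \<subseteq> S \<and> rad_diff_ideal_gen R Ds S0 = carrier R"
proof -
  have "\<one> \<in> rad_diff_ideal_gen R Ds S"
  proof (rule ccontr)
    assume "\<one> \<notin> rad_diff_ideal_gen R Ds S"
    then obtain P where "P \<in> diff_spec R Ds" "rad_diff_ideal_gen R Ds S \<subseteq> P"
      using proper_rad_diff_ideal_in_diff_prime[OF dr rad_diff_ideal_gen_rad_diff_ideal[OF dr S]]
      by blast
    then show False using cover rad_diff_ideal_gen_incl[of S R Ds] by blast
  qed
  then obtain S0 where S0: "finite S0" "S0 \<subseteq> S" "\<one> \<in> rad_diff_ideal_gen R Ds S0"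
    using rad_diff_ideal_gen_finite[OF dr S] by blast
  have "ideal (rad_diff_ideal_gen R Ds S0) R"
    using rad_diff_ideal_gen_rad_diff_ideal[OF dr] S0(2) S
    unfolding rad_diff_ideal_def radical_ideal_def by (meson subset_trans)
  then have "rad_diff_ideal_gen R Ds S0 = carrier R"
    using S0(3) by (rule ideal.one_imp_carrier)
  then show ?thesis using S0 by blast
qed

lemma frac_rel_equiv:
  fixes R (structure)
  assumes "primeideal Q R"
  shows "equiv (carrier R \<times> (carrier R - Q)) (frac_rel R Q)"
proof -
  interpret primeideal Q R by fact
  show ?thesis
  proof (rule equivI)
    show "frac_rel R Q \<subseteq> (carrier R \<times> (carrier R - Q)) \<times> (carrier R \<times> (carrier R - Q))"
      unfolding frac_rel_def by auto
    show "refl_on (carrier R \<times> (carrier R - Q)) (frac_rel R Q)"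
    proof (rule refl_onI)
      fix p assume "p \<in> carrier R \<times> (carrier R - Q)"
      then obtain a b where p: "p = (a, b)" "a \<in> carrier R" "b \<in> carrier R - Q" by blast
      then have "a \<otimes> b \<ominus> a \<otimes> b = \<zero>" by simp algebra
      then have "a \<otimes> b \<ominus> a \<otimes> b \<in> Q" by simp
      then show "(p, p) \<in> frac_rel R Q" using p unfolding frac_rel_def by simp
    qed
    show "sym (frac_rel R Q)"
    proof (rule symI)
      fix p q assume "(p, q) \<in> frac_rel R Q"
      then obtain a b c d where pq: "p = (a, b)" "q = (c, d)"
        "a \<in> carrier R" "b \<in> carrier R - Q" "c \<in> carrier R" "d \<in> carrier R - Q"
        "a \<otimes> d \<ominus> c \<otimes> b \<in> Q"
        unfolding frac_rel_def by auto
      have "c \<otimes> b \<ominus> a \<otimes> d = \<ominus> (a \<otimes> d \<ominus> c \<otimes> b)" using pq(3-6) by simp algebra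
      then have "c \<otimes> b \<ominus> a \<otimes> d \<in> Q" using pq(7) a_inv_closed by simp
      then show "(q, p) \<in> frac_rel R Q" using pq unfolding frac_rel_def by simp
    qed
    show "trans (frac_rel R Q)"
    proof (rule transI)
      fix p q r assume "(p, q) \<in> frac_rel R Q" "(q, r) \<in> frac_rel R Q"
      then obtain a b c d e f where pqr: "p = (a, b)" "q = (c, d)" "r = (e, f)"
        "a \<in> carrier R" "b \<in> carrier R - Q" "c \<in> carrier R" "d \<in> carrier R - Q"
        "e \<in> carrier R" "f \<in> carrier R - Q"
        "a \<otimes> d \<ominus> c \<otimes> b \<in> Q" "c \<otimes> f \<ominus> e \<otimes> d \<in> Q"
        unfolding frac_rel_def by auto
      text \<open>Cross-multiplying: \<open>d(af - eb) = f(ad - cb) + b(cf - ed)\<close>, and \<open>d \<notin> Q\<close>.\<close>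
      have "d \<otimes> (a \<otimes> f \<ominus> e \<otimes> b) = f \<otimes> (a \<otimes> d \<ominus> c \<otimes> b) \<oplus> b \<otimes> (c \<otimes> f \<ominus> e \<otimes> d)"
        using pqr(4-9) by simp algebra
      also have "\<dots> \<in> Q" using pqr(4-11) I_l_closed by simp
      finally have "a \<otimes> f \<ominus> e \<otimes> b \<in> Q"
        using I_prime[of d "a \<otimes> f \<ominus> e \<otimes> b"] pqr(4-9) by auto
      then show "(p, r) \<in> frac_rel R Q" using pqr unfolding frac_rel_def by simp
    qed
  qed
qed

lemma frac_eq_iff:
  fixes R (structure)
  assumes Q: "primeideal Q R" and ab: "a \<in> carrier R" "b \<in> carrier R - Q"
    and cd: "c \<in> carrier R" "d \<in> carrier R - Q"
  shows "frac R Q a b = frac R Q c d \<longleftrightarrow> a \<otimes> d \<ominus> c \<otimes> b \<in> Q"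
proof -
  have "frac R Q a b = frac R Q c d \<longleftrightarrow> ((a, b), (c, d)) \<in> frac_rel R Q"
    using equiv_class_eq_iff[OF frac_rel_equiv[OF Q], of "(a, b)" "(c, d)"] ab cd
    unfolding frac_def by auto
  then show ?thesis using ab cd unfolding frac_rel_def by auto
qed

lemma frac_mult_frac:
  fixes R (structure)
  assumes Q: "primeideal Q R" and ab: "a \<in> carrier R" "b \<in> carrier R - Q"
    and cd: "c \<in> carrier R" "d \<in> carrier R - Q"
  shows "frac_mult R Q (frac R Q a b) (frac R Q c d) = frac R Q (a \<otimes> c) (b \<otimes> d)"
proof -
  interpret primeideal Q R by fact
  have equiv: "equiv (carrier R \<times> (carrier R - Q)) (frac_rel R Q)"
    by (rule frac_rel_equiv[OF Q])
  have rep: "(SOME u. u \<in> frac R Q x y) \<in> frac R Q x y"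
    if "x \<in> carrier R" "y \<in> carrier R - Q" for x y
    using equiv_class_self[OF equiv] that unfolding frac_def by (intro someI) auto
  obtain u1 u2 where u: "(SOME u. u \<in> frac R Q a b) = (u1, u2)" by fastforce
  obtain v1 v2 where v: "(SOME v. v \<in> frac R Q c d) = (v1, v2)" by fastforce
  have hu: "u1 \<in> carrier R" "u2 \<in> carrier R - Q" "a \<otimes> u2 \<ominus> u1 \<otimes> b \<in> Q"
    using rep[OF ab] unfolding u by (auto simp: frac_def frac_rel_def)
  have hv: "v1 \<in> carrier R" "v2 \<in> carrier R - Q" "c \<otimes> v2 \<ominus> v1 \<otimes> d \<in> Q"
    using rep[OF cd] unfolding v by (auto simp: frac_def frac_rel_def)
  have uv: "u2 \<otimes> v2 \<in> carrier R - Q" and bd: "b \<otimes> d \<in> carrier R - Q"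
    using hu hv ab cd I_prime by auto
  have "(u1 \<otimes> v1) \<otimes> (b \<otimes> d) \<ominus> (a \<otimes> c) \<otimes> (u2 \<otimes> v2) =
      \<ominus> ((v1 \<otimes> d) \<otimes> (a \<otimes> u2 \<ominus> u1 \<otimes> b) \<oplus> (a \<otimes> u2) \<otimes> (c \<otimes> v2 \<ominus> v1 \<otimes> d))"
    using hu hv ab cd by simp algebra
  also have "\<dots> \<in> Q" using hu hv ab cd I_l_closed a_inv_closed by simp
  finally have "frac R Q (u1 \<otimes> v1) (u2 \<otimes> v2) = frac R Q (a \<otimes> c) (b \<otimes> d)"
    using frac_eq_iff[OF Q] hu hv ab cd uv bd by simp
  then show ?thesis unfolding frac_mult_def Let_def u v by simp
qed

definition clears_denominator ::
  "('a, 'b) ring_scheme \<Rightarrow> ('a \<Rightarrow> 'a) set \<Rightarrow> ('a set \<Rightarrow> ('a \<times> 'a) set) \<Rightarrow> 'a \<Rightarrow> bool" where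
  "clears_denominator R Ds \<eta> c \<longleftrightarrow> c \<in> carrier R \<and>
     (\<exists>a\<in>carrier R. \<forall>Q\<in>diff_spec R Ds. frac_mult R Q (iota' R c Q) (\<eta> Q) = iota' R a Q)"

lemma local_clearing_denominator:
  fixes R (structure)
  assumes \<eta>: "\<eta> \<in> O' R Ds (diff_spec R Ds)" and P: "P \<in> diff_spec R Ds"
  shows "\<exists>c. clears_denominator R Ds \<eta> c \<and> c \<notin> P"
proof -
  let ?X = "diff_spec R Ds"
  have prP: "primeideal P R" using P diff_spec_def by blast
  then interpret cring R by (rule primeideal.axioms(2))
  have "regular_at R Ds ?X \<eta> P" using \<eta> P unfolding O'_def by blast
  then obtain W a b where W: "kolchin_open R Ds W" "P \<in> W" and ab: "a \<in> carrier R" "b \<in> carrier R"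
    and on_W: "\<And>Q. Q \<in> W \<Longrightarrow> b \<notin> Q \<and> \<eta> Q = frac R Q a b"
    unfolding regular_at_def by (elim exE conjE bexE) blast
  obtain E where E: "E \<subseteq> carrier R" "W = ?X - {Q \<in> ?X. E \<subseteq> Q}"
    using W(1) unfolding kolchin_open_def by blast
  obtain s where s: "s \<in> carrier R" "s \<notin> P" and X_s: "\<And>Q. Q \<in> ?X \<Longrightarrow> s \<notin> Q \<Longrightarrow> Q \<in> W"
    using W(2) E by blast
  have "b \<notin> P" using on_W W(2) by blast
  then have bs_P: "b \<otimes> s \<notin> P" using primeideal.I_prime[OF prP ab(2) s(1)] s(2) by blast
  text \<open>On \<open>X\<^sub>s\<close> the section is \<open>a/b\<close>; off \<open>X\<^sub>s\<close> the factor \<open>s\<close> kills the difference.\<close>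
  have "frac_mult R Q (iota' R (b \<otimes> s) Q) (\<eta> Q) = iota' R (a \<otimes> s) Q" if Q: "Q \<in> ?X" for Q
  proof -
    have prQ: "primeideal Q R" using Q diff_spec_def by blast
    then interpret Q: primeideal Q R .
    have one: "\<one> \<in> carrier R - Q" using Q.I_notcarr Q.one_imp_carrier by blast
    obtain a0 b0 where rep: "\<eta> Q = frac R Q a0 b0" "a0 \<in> carrier R" "b0 \<in> carrier R - Q"
      and diff: "s \<otimes> (b \<otimes> a0 \<ominus> a \<otimes> b0) \<in> Q"
    proof (cases "s \<in> Q")
      case True
      obtain a0 b0 where "\<eta> Q = frac R Q a0 b0" "a0 \<in> carrier R" "b0 \<in> carrier R - Q"
        using \<eta> Q unfolding O'_def residue_field_def by blast
      moreover have "s \<otimes> (b \<otimes> a0 \<ominus> a \<otimes> b0) \<in> Q"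
        using Q.I_r_closed[OF True] ab calculation(2,3) by simp
      ultimately show ?thesis by (rule that)
    next
      case False
      then have "b \<notin> Q" "\<eta> Q = frac R Q a b" using on_W X_s Q by auto
      moreover have "s \<otimes> (b \<otimes> a \<ominus> a \<otimes> b) = \<zero>" using ab s(1) by algebra
      ultimately show ?thesis using that ab by simp
    qed
    have "(b \<otimes> s) \<otimes> a0 \<otimes> \<one> \<ominus> (a \<otimes> s) \<otimes> (\<one> \<otimes> b0) = s \<otimes> (b \<otimes> a0 \<ominus> a \<otimes> b0)"
      using ab s(1) rep(2) DiffD1[OF rep(3)] by algebra
    then have "frac R Q ((b \<otimes> s) \<otimes> a0) (\<one> \<otimes> b0) = frac R Q (a \<otimes> s) \<one>"
      using frac_eq_iff[OF prQ] diff ab s(1) rep(2,3) one Q.I_prime by auto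
    then show ?thesis
      unfolding iota'_def rep(1) using frac_mult_frac[OF prQ] ab s(1) rep(2,3) one by simp
  qed
  then have "clears_denominator R Ds \<eta> (b \<otimes> s)"
    unfolding clears_denominator_def using ab s(1) by blast
  then show ?thesis using bs_P by blast
qed

text \<open>The denominators of \<open>\<eta>\<close> avoid every point, so finitely many of them
  already generate the unit radical differential ideal.\<close>
theorem lemma2p5:
  fixes R :: "('a, 'b) ring_scheme" and Ds :: "('a \<Rightarrow> 'a) set"
  assumes "diff_ring R Ds"
    and "\<eta> \<in> O' R Ds (diff_spec R Ds)"
  shows "\<exists>bs :: 'a list. set bs \<subseteq> carrier R \<and>
           (\<forall>b\<in>set bs. \<exists>a\<in>carrier R. \<forall>P\<in>diff_spec R Ds.
               frac_mult R P (iota' R b P) (\<eta> P) = iota' R a P) \<and>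
           rad_diff_ideal_gen R Ds (set bs) = carrier R"
proof -
  define S where "S = {c. clears_denominator R Ds \<eta> c}"
  have S: "S \<subseteq> carrier R" unfolding S_def clears_denominator_def by blast
  have cover: "\<not> S \<subseteq> P" if P: "P \<in> diff_spec R Ds" for P
  proof -
    obtain c where "clears_denominator R Ds \<eta> c" "c \<notin> P"
      using local_clearing_denominator[OF assms(2) P] by blast
    then show ?thesis unfolding S_def by blast
  qed
  obtain S0 where S0: "finite S0" "S0 \<subseteq> S" "rad_diff_ideal_gen R Ds S0 = carrier R"
    using diff_spec_finite_cover[OF assms(1) S cover] by blast
  obtain bs where bs: "set bs = S0" using finite_list[OF S0(1)] by blast
  have "\<forall>b\<in>set bs. clears_denominator R Ds \<eta> b" using bs S0(2) unfolding S_def by blast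
  then show ?thesis
    unfolding clears_denominator_def using bs S0(3) by blast
qed

end
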